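(* Let $X$ be a non-empty set and $A$ a non-empty subset of $X$, and let $P=\operatorname{Reg}(\mathcal T_X(A))$. Then $$\operatorname{rank}(P)=\begin{cases}1 & \text{if } |A|=1,\\ 2^{|X|} & \text{if } |A|\ge2 \text{ and } X \text{ is infinite},\\ 3 & \text{if } 3\le|A|=|X| \text{ is finite},\\ 1+|A|^{|X\setminus A|} & \text{otherwise}.\end{cases}$$
   Context: $\mathcal T_X(A)=\{f:X\to X\mid\operatorname{im}(f)\subseteq A\}$ under composition; $\operatorname{Reg}(T)$ is the set of regular elements of $T$, which here is a subsemigroup. $\operatorname{rank}(T)$ is the minimum cardinality of a generating set of the semigroup $T$. *)

theory Defs
  imports Main "HOL-Library.FuncSet" "HOL-Library.Equipollence"
begin

text \<open>Maps X -> X are represented extensionally: functions on the type 'a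
that are undefined outside X.\<close>

definition TXA :: "'a set \<Rightarrow> 'a set \<Rightarrow> ('a \<Rightarrow> 'a) set" where
  "TXA X A = {f \<in> X \<rightarrow>\<^sub>E X. f ` X \<subseteq> A}"

definition comp_on :: "'a set \<Rightarrow> ('a \<Rightarrow> 'a) \<Rightarrow> ('a \<Rightarrow> 'a) \<Rightarrow> ('a \<Rightarrow> 'a)" where
  "comp_on X f g = restrict (f \<circ> g) X"

definition Reg :: "'b set \<Rightarrow> ('b \<Rightarrow> 'b \<Rightarrow> 'b) \<Rightarrow> 'b set" where
  "Reg S m = {x \<in> S. \<exists>y \<in> S. m (m x y) x = x}"

inductive_set sg_gen :: "('b \<Rightarrow> 'b \<Rightarrow> 'b) \<Rightarrow> 'b set \<Rightarrow> 'b set"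
  for m :: "'b \<Rightarrow> 'b \<Rightarrow> 'b" and G :: "'b set" where
  base: "x \<in> G \<Longrightarrow> x \<in> sg_gen m G"
| mult: "x \<in> sg_gen m G \<Longrightarrow> y \<in> sg_gen m G \<Longrightarrow> m x y \<in> sg_gen m G"

definition generates :: "('b \<Rightarrow> 'b \<Rightarrow> 'b) \<Rightarrow> 'b set \<Rightarrow> 'b set \<Rightarrow> bool" where
  "generates m S G \<longleftrightarrow> G \<subseteq> S \<and> sg_gen m G = S"

text \<open>rank(S) equals the cardinality of K: some generating set has cardinality |K|,
  and every generating set has cardinality at least |K|.\<close>
definition has_rank :: "('b \<Rightarrow> 'b \<Rightarrow> 'b) \<Rightarrow> 'b set \<Rightarrow> 'c set \<Rightarrow> bool" where
  "has_rank m S K \<longleftrightarrow> (\<exists>G. generates m S G \<and> G \<approx> K) \<and> (\<forall>G. generates m S G \<longrightarrow> K \<lesssim> G)"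

end

theory Submission
  imports Defs "HOL-Combinatorics.Permutations"
begin

text \<open>A map $f \in T_X(A)$ is regular iff $f(X) = f(A)$. For infinite $X$ and $|A| \ge 2$ there are
  $2^{|X|}$ regular elements, while a generating set $G$ generates at most $\max(|G|, \aleph_0)$
  elements; so $G$ is as large as the whole semigroup.

  For finite $X$, the elements of maximal rank ($f(A) = A$) are the pairs $(p, w)$ of a
  permutation $p$ of $A$ and a map $w : X \setminus A \to A$, composing as
  $(p, w)(q, v) = (pq, v)$, and their complement is an ideal. Hence a generating set contains,
  for every $w$, an element of maximal rank with outer map $w$, and at least one element of
  smaller rank. Conversely these suffice once the permutations attached to them include a
  transposition and an $|A|$-cycle, as both generate the symmetric group on $A$: every element
  of smaller rank is then a product of conjugates of one idempotent of rank $|A| - 1$ and of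
  elements of larger rank. If $A = X$ only one outer map exists, so for $|A| \ge 3$ the
  non-abelian group $\mathrm{Sym}(A)$ forces two generators of maximal rank.\<close>

section \<open>Composition on $X$ and generated subsemigroups\<close>

lemma comp_on_apply [simp]: "x \<in> X \<Longrightarrow> comp_on X f g x = f (g x)"
  by (simp add: comp_on_def)

lemma comp_on_assoc:
  assumes "h ` X \<subseteq> X"
  shows "comp_on X (comp_on X f g) h = comp_on X f (comp_on X g h)"
proof
  fix x show "comp_on X (comp_on X f g) h x = comp_on X f (comp_on X g h) x"
    using assms by (cases "x \<in> X") (auto simp: comp_on_def)
qed

lemma sg_gen_least:
  assumes "G \<subseteq> S" and "\<And>x y. x \<in> S \<Longrightarrow> y \<in> S \<Longrightarrow> m x y \<in> S"
  shows "sg_gen m G \<subseteq> S"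
proof
  fix x assume "x \<in> sg_gen m G"
  then show "x \<in> S" by induction (use assms in auto)
qed

lemma sg_gen_empty: "sg_gen m {} = {}"
  using sg_gen_least[of "{}" "{}" m] by blast

text \<open>\<open>comp_pow X g k\<close> is the $(k+1)$-st power of \<open>g\<close>.\<close>
primrec comp_pow :: "'a set \<Rightarrow> ('a \<Rightarrow> 'a) \<Rightarrow> nat \<Rightarrow> 'a \<Rightarrow> 'a" where
  "comp_pow X g 0 = g"
| "comp_pow X g (Suc k) = comp_on X g (comp_pow X g k)"

lemma comp_pow_image: "g ` X \<subseteq> X \<Longrightarrow> comp_pow X g k ` X \<subseteq> X"
  by (induction k) auto

lemma comp_on_comp_pow:
  assumes "g ` X \<subseteq> X"
  shows "comp_on X (comp_pow X g i) (comp_pow X g j) = comp_pow X g (Suc (i + j))"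
  by (induction i) (simp_all add: comp_on_assoc comp_pow_image[OF assms])

lemma sg_gen_singleton_commute:
  assumes "g ` X \<subseteq> X" and "x \<in> sg_gen (comp_on X) {g}" and "y \<in> sg_gen (comp_on X) {g}"
  shows "comp_on X x y = comp_on X y x"
proof -
  have "sg_gen (comp_on X) {g} \<subseteq> range (comp_pow X g)"
  proof (rule sg_gen_least)
    show "{g} \<subseteq> range (comp_pow X g)" using rangeI[of "comp_pow X g" 0] by simp
  next
    fix x y assume "x \<in> range (comp_pow X g)" "y \<in> range (comp_pow X g)"
    then obtain i j where "x = comp_pow X g i" "y = comp_pow X g j" by blast
    then show "comp_on X x y \<in> range (comp_pow X g)"
      using comp_on_comp_pow[OF assms(1), of i j] by (metis rangeI)
  qed
  then obtain i j where "x = comp_pow X g i" "y = comp_pow X g j" using assms(2,3) by blast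
  then show ?thesis using comp_on_comp_pow[OF assms(1)] by (simp add: add.commute)
qed

lemma has_rank_lessThanI:
  assumes "generates m S G\<^sub>0" and "finite G\<^sub>0" and "card G\<^sub>0 = N"
    and "\<And>G. generates m S G \<Longrightarrow> finite G \<and> N \<le> card G"
  shows "has_rank m S {..<N}"
  using assms lepoll_iff_card_le[of "{..<N}"] unfolding has_rank_def
  by (auto simp: eqpoll_iff_finite_card)

section \<open>Regular elements of $T_X(A)$\<close>

definition RegTXA :: "'a set \<Rightarrow> 'a set \<Rightarrow> ('a \<Rightarrow> 'a) set" where
  "RegTXA X A = Reg (TXA X A) (comp_on X)"

locale subset_TXA =
  fixes X A :: "'a set"
  assumes A_subset: "A \<subseteq> X" and A_nonempty: "A \<noteq> {}"
begin

text \<open>An inner inverse sends each value of $f$ back to a preimage in $A$.\<close>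
lemma RegTXA_iff: "f \<in> RegTXA X A \<longleftrightarrow> f \<in> X \<rightarrow>\<^sub>E X \<and> f ` X \<subseteq> A \<and> f ` X \<subseteq> f ` A"
proof
  assume "f \<in> RegTXA X A"
  then obtain g where f: "f \<in> TXA X A" and g: "g \<in> TXA X A"
    and e: "comp_on X (comp_on X f g) f = f"
    unfolding RegTXA_def Reg_def by auto
  have "f x \<in> f ` A" if "x \<in> X" for x
  proof -
    have fx: "f x \<in> X" using f that unfolding TXA_def by auto
    have "f x = comp_on X (comp_on X f g) f x" using e by simp
    also have "\<dots> = f (g (f x))" using that fx by simp
    finally show ?thesis using g fx unfolding TXA_def by auto
  qed
  then show "f \<in> X \<rightarrow>\<^sub>E X \<and> f ` X \<subseteq> A \<and> f ` X \<subseteq> f ` A"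
    using f unfolding TXA_def by auto
next
  assume f: "f \<in> X \<rightarrow>\<^sub>E X \<and> f ` X \<subseteq> A \<and> f ` X \<subseteq> f ` A"
  obtain a\<^sub>0 where a\<^sub>0: "a\<^sub>0 \<in> A" using A_nonempty by auto
  define g where "g = restrict (\<lambda>y. if y \<in> f ` A then inv_into A f y else a\<^sub>0) X"
  have g_TXA: "g \<in> TXA X A"
    unfolding TXA_def g_def using a\<^sub>0 A_subset by (auto simp: inv_into_into)
  have "comp_on X (comp_on X f g) f = f"
  proof
    fix x show "comp_on X (comp_on X f g) f x = f x"
    proof (cases "x \<in> X")
      case True
      then have "f x \<in> X" "f x \<in> f ` A" using f by auto
      then show ?thesis using True by (simp add: g_def f_inv_into_f)
    next
      case False
      then show ?thesis using f by (auto simp: comp_on_def PiE_def extensional_def)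
    qed
  qed
  then show "f \<in> RegTXA X A"
    unfolding RegTXA_def Reg_def using g_TXA f unfolding TXA_def by auto
qed

lemma RegTXA_D:
  assumes "f \<in> RegTXA X A"
  shows "f \<in> X \<rightarrow>\<^sub>E X" and "f ` X \<subseteq> A" and "f ` X \<subseteq> f ` A"
  using assms RegTXA_iff by simp_all

lemma finite_RegTXA: "finite X \<Longrightarrow> finite (RegTXA X A)"
  using RegTXA_D(1) by (meson finite_PiE finite_subset subsetI)

lemma comp_on_RegTXA:
  assumes f: "f \<in> RegTXA X A" and g: "g \<in> RegTXA X A"
  shows "comp_on X f g \<in> RegTXA X A"
proof -
  note f' = RegTXA_D[OF f] and g' = RegTXA_D[OF g]
  have "comp_on X f g ` X \<subseteq> comp_on X f g ` A"
  proof
    fix y assume "y \<in> comp_on X f g ` X"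
    then obtain x where x: "x \<in> X" "y = f (g x)" by auto
    then obtain a where a: "a \<in> A" "g x = g a" using g' by blast
    then have "comp_on X f g a = y" using x A_subset by auto
    then show "y \<in> comp_on X f g ` A" using a(1) by blast
  qed
  moreover have "comp_on X f g \<in> X \<rightarrow>\<^sub>E X" using f' g' by (auto simp: comp_on_def)
  ultimately show ?thesis using f' g' RegTXA_iff by (auto simp: PiE_iff image_subset_iff)
qed

lemma sg_gen_RegTXA: "G \<subseteq> RegTXA X A \<Longrightarrow> sg_gen (comp_on X) G \<subseteq> RegTXA X A"
  by (intro sg_gen_least) (auto intro: comp_on_RegTXA)

lemma generates_RegTXA: "generates (comp_on X) (RegTXA X A) (RegTXA X A)"
  unfolding generates_def using sg_gen_RegTXA by (auto intro: sg_gen.base)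

lemma generators_subset:
  assumes "generates (comp_on X) (RegTXA X A) G"
  shows "G \<subseteq> RegTXA X A" and "sg_gen (comp_on X) G = RegTXA X A"
  using assms unfolding generates_def by auto

lemma restrict_const_RegTXA: "a \<in> A \<Longrightarrow> restrict (\<lambda>_. a) X \<in> RegTXA X A"
  using A_subset by (auto simp: RegTXA_iff)

lemma has_rank_card_1:
  assumes "card A = 1"
  shows "has_rank (comp_on X) (RegTXA X A) {..<1::nat}"
proof -
  obtain a where a: "A = {a}" using assms card_1_singletonE by blast
  have "f = restrict (\<lambda>_. a) X" if "f \<in> RegTXA X A" for f
  proof
    fix x show "f x = restrict (\<lambda>_. a) X x"
      using RegTXA_D[OF that] a by (cases "x \<in> X") (auto simp: PiE_def extensional_def)
  qed
  then have single: "RegTXA X A = {restrict (\<lambda>_. a) X}"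
    using restrict_const_RegTXA a by blast
  show ?thesis
  proof (rule has_rank_lessThanI[OF generates_RegTXA])
    fix G assume "generates (comp_on X) (RegTXA X A) G"
    note G = generators_subset[OF this]
    then have "G \<noteq> {}" using single sg_gen_empty by force
    moreover have "finite G" using G(1) single finite_subset by auto
    ultimately show "finite G \<and> 1 \<le> card G" by (simp add: Suc_le_eq card_gt_0_iff)
  qed (use single in auto)
qed

end

section \<open>Cardinality of generated subsemigroups\<close>

unbundle cardinal_syntax

primrec sg_level :: "('b \<Rightarrow> 'b \<Rightarrow> 'b) \<Rightarrow> 'b set \<Rightarrow> nat \<Rightarrow> 'b set" where
  "sg_level m G 0 = G"
| "sg_level m G (Suc n) = sg_level m G n \<union> case_prod m ` (sg_level m G n \<times> sg_level m G n)"

lemma sg_level_mono: "i \<le> j \<Longrightarrow> sg_level m G i \<subseteq> sg_level m G j"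
  by (induction j) (auto simp: le_Suc_eq)

lemma sg_gen_subset_UN_sg_level: "sg_gen m G \<subseteq> (\<Union>n. sg_level m G n)"
proof
  fix x assume "x \<in> sg_gen m G"
  then show "x \<in> (\<Union>n. sg_level m G n)"
  proof induction
    case (base x) then show ?case by (auto intro: exI[of _ 0])
  next
    case (mult x y)
    then obtain i j where "x \<in> sg_level m G i" "y \<in> sg_level m G j" by auto
    then have "x \<in> sg_level m G (max i j)" "y \<in> sg_level m G (max i j)"
      using sg_level_mono[of i "max i j" m G] sg_level_mono[of j "max i j" m G] by auto
    then have "m x y \<in> sg_level m G (Suc (max i j))" by auto
    then show ?case by blast
  qed
qed

lemma card_of_sg_level:
  assumes "infinite H" and "|G| \<le>o |H|"
  shows "|sg_level m G n| \<le>o |H|"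
proof (induction n)
  case 0 then show ?case using assms(2) by simp
next
  case (Suc n)
  have H: "Card_order |H|" by (rule card_of_Card_order)
  have FH: "infinite (Field (card_of H))" using assms(1) unfolding Field_card_of .
  have "|sg_level m G n \<times> sg_level m G n| \<le>o |H|"
    using card_of_Times_ordLeq_infinite_Field[OF FH Suc Suc H] .
  then have "|case_prod m ` (sg_level m G n \<times> sg_level m G n)| \<le>o |H|"
    by (rule ordLeq_transitive[OF card_of_image])
  then show ?case
    using card_of_Un_ordLeq_infinite_Field[OF FH Suc _ H] by (simp only: sg_level.simps)
qed

lemma sg_gen_lepoll:
  assumes "infinite H" and "G \<lesssim> H"
  shows "sg_gen m G \<lesssim> H"
proof -
  have "|G| \<le>o |H|" using assms(2) unfolding lepoll_def card_of_ordLeq[symmetric] .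
  then have "|\<Union>n. sg_level m G n| \<le>o |H|"
    using card_of_sg_level[OF assms(1)] infinite_iff_card_of_nat[THEN iffD1, OF assms(1)]
    by (intro card_of_UNION_ordLeq_infinite[OF assms(1)] ballI)
  then have "|sg_gen m G| \<le>o |H|"
    by (rule ordLeq_transitive[OF card_of_mono1[OF sg_gen_subset_UN_sg_level]])
  then show ?thesis unfolding lepoll_def card_of_ordLeq[symmetric] .
qed

section \<open>The infinite case\<close>

lemma eqpoll_Pow: "A \<approx> B \<Longrightarrow> Pow A \<approx> Pow B"
  unfolding eqpoll_def using bij_betw_Pow by blast

lemma PiE_lepoll_Pow_Times: "X \<rightarrow>\<^sub>E X \<lesssim> Pow (X \<times> X)"
proof -
  define graph where "graph f = {(x, f x) | x. x \<in> X}" for f :: "'a \<Rightarrow> 'a"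
  have "inj_on graph (X \<rightarrow>\<^sub>E X)"
  proof
    fix f g assume f: "f \<in> X \<rightarrow>\<^sub>E X" and g: "g \<in> X \<rightarrow>\<^sub>E X" and e: "graph f = graph g"
    have "f x = g x" if "x \<in> X" for x
      using that e[unfolded graph_def, THEN eqset_imp_iff, of "(x, f x)"] by auto
    then show "f = g" by (rule PiE_ext[OF f g])
  qed
  moreover have "graph ` (X \<rightarrow>\<^sub>E X) \<subseteq> Pow (X \<times> X)" unfolding graph_def by auto
  ultimately show ?thesis unfolding lepoll_def by blast
qed

lemma infinite_Diff_doubleton_eqpoll:
  assumes "infinite X" and "a \<in> X" and "b \<in> X"
  shows "X - {a, b} \<approx> X"
proof -
  have "infinite (X - {a, b})" using assms by simp
  then have "insert a (insert b (X - {a, b})) \<approx> X - {a, b}"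
    by (meson eqpoll_trans finite_insert infinite_insert_eqpoll)
  moreover have "insert a (insert b (X - {a, b})) = X" using assms by auto
  ultimately show ?thesis by (simp add: eqpoll_sym)
qed

context subset_TXA
begin

lemma Pow_lepoll_RegTXA:
  assumes ab: "a \<in> A" "b \<in> A" "a \<noteq> b"
  shows "Pow (X - {a, b}) \<lesssim> RegTXA X A"
proof -
  define F where "F S = restrict (\<lambda>x. if x = a then a else if x = b then b else if x \<in> S then a else b) X"
    for S
  have "inj_on F (Pow (X - {a, b}))"
  proof
    fix S T assume "S \<in> Pow (X - {a, b})" "T \<in> Pow (X - {a, b})" and e: "F S = F T"
    have "x \<in> S \<longleftrightarrow> x \<in> T" if "x \<in> X - {a, b}" for x
      using that fun_cong[OF e, of x] ab unfolding F_def by (auto split: if_splits)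
    then show "S = T" using \<open>S \<in> _\<close> \<open>T \<in> _\<close> by blast
  qed
  moreover have "F S \<in> RegTXA X A" for S
  proof -
    have "F S a = a" "F S b = b" using ab A_subset by (auto simp: F_def)
    then have "F S ` X \<subseteq> F S ` A" using ab unfolding F_def by (auto intro: image_eqI)
    then show ?thesis using ab A_subset by (auto simp: RegTXA_iff F_def)
  qed
  ultimately show ?thesis unfolding lepoll_def by blast
qed

lemma RegTXA_eqpoll_Pow:
  assumes X: "infinite X" and ab: "a \<in> A" "b \<in> A" "a \<noteq> b"
  shows "RegTXA X A \<approx> Pow X"
proof (rule lepoll_antisym)
  have "RegTXA X A \<lesssim> X \<rightarrow>\<^sub>E X" using RegTXA_D(1) by (intro subset_imp_lepoll) blast
  also have "\<dots> \<lesssim> Pow (X \<times> X)" by (rule PiE_lepoll_Pow_Times)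
  also have "Pow (X \<times> X) \<approx> Pow X"
    using X card_of_Times_same_infinite eqpoll_iff_card_of_ordIso eqpoll_Pow by blast
  finally show "RegTXA X A \<lesssim> Pow X" .
  have "Pow X \<approx> Pow (X - {a, b})"
    using X ab A_subset by (intro eqpoll_Pow eqpoll_sym[OF infinite_Diff_doubleton_eqpoll]) auto
  also have "\<dots> \<lesssim> RegTXA X A" using ab by (rule Pow_lepoll_RegTXA)
  finally show "Pow X \<lesssim> RegTXA X A" .
qed

lemma has_rank_infinite:
  assumes X: "infinite X" and "card A \<noteq> 1"
  shows "has_rank (comp_on X) (RegTXA X A) (Pow X)"
proof -
  obtain a b where ab: "a \<in> A" "b \<in> A" "a \<noteq> b"
    using assms(2) A_nonempty by (metis is_singletonI' is_singleton_altdef)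
  note Pow_eqpoll = RegTXA_eqpoll_Pow[OF X ab]
  have "Pow X \<lesssim> G" if "generates (comp_on X) (RegTXA X A) G" for G
  proof -
    have Pow_le: "Pow X \<lesssim> sg_gen (comp_on X) G"
      using Pow_eqpoll generators_subset(2)[OF that] by (simp add: eqpoll_sym eqpoll_imp_lepoll)
    show ?thesis
    proof (cases "finite G")
      case False
      with Pow_le show ?thesis using sg_gen_lepoll lepoll_trans by blast
    next
      case True
      then have "sg_gen (comp_on X) G \<lesssim> X"
        using X by (intro sg_gen_lepoll finite_lepoll_infinite)
      then have "Pow X \<lesssim> X" using Pow_le lepoll_trans by blast
      then show ?thesis using lesspoll_Pow_self[of X] lepoll_Pow_self[of X]
        unfolding lesspoll_def by (meson lepoll_antisym eqpoll_sym)
    qed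
  qed
  then show ?thesis unfolding has_rank_def using generates_RegTXA Pow_eqpoll by blast
qed

end

section \<open>Generating the permutations of a finite set\<close>

lemma transpose_conj:
  assumes "inj f" and "\<And>y. f (g y) = y"
  shows "f \<circ> Transposition.transpose a b \<circ> g = Transposition.transpose (f a) (f b)"
proof
  fix y
  have "f (Transposition.transpose a b (g y)) = Transposition.transpose (f a) (f b) (f (g y))"
    using assms(1) by (simp add: transpose_def inj_eq)
  then show "(f \<circ> Transposition.transpose a b \<circ> g) y = Transposition.transpose (f a) (f b) y"
    using assms(2) by simp
qed

lemma permutes_map_pair:
  assumes "a \<in> A" "b \<in> A" "c \<in> A" "d \<in> A" "a \<noteq> b" "c \<noteq> d"
  obtains p where "p permutes A" and "p a = c" and "p b = d"
proof
  define s where "s = Transposition.transpose a c"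
  have "s b \<in> A" using assms unfolding s_def by (auto simp: transpose_def)
  then show "Transposition.transpose (s b) d \<circ> s permutes A"
    using assms unfolding s_def by (simp add: permutes_swap_id permutes_compose)
  have "s b \<noteq> c" using assms unfolding s_def by (auto simp: transpose_def)
  then show "(Transposition.transpose (s b) d \<circ> s) a = c" "(Transposition.transpose (s b) d \<circ> s) b = d"
    using assms unfolding s_def by (auto simp: transpose_def)
qed

lemma transpose_comp_not_commute:
  assumes "a \<noteq> b" and "b \<noteq> c" and "a \<noteq> c"
  shows "Transposition.transpose a b \<circ> Transposition.transpose b c
    \<noteq> Transposition.transpose b c \<circ> Transposition.transpose a b"
proof
  assume "Transposition.transpose a b \<circ> Transposition.transpose b c
    = Transposition.transpose b c \<circ> Transposition.transpose a b"
  then have "Transposition.transpose a b (Transposition.transpose b c c)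
      = Transposition.transpose b c (Transposition.transpose a b c)" by (metis comp_apply)
  then show False using assms by (simp add: transpose_def)
qed

locale enumeration =
  fixes A :: "'a set" and h :: "nat \<Rightarrow> 'a" and n :: nat
  assumes bij_h: "bij_betw h {..<n} A" and two_le_n: "2 \<le> n"
begin

definition rotation :: "'a \<Rightarrow> 'a" where
  "rotation y = (if y \<in> A then h (Suc (inv_into {..<n} h y) mod n) else y)"

lemma h_in_A: "i < n \<Longrightarrow> h i \<in> A"
  using bij_h by (auto simp: bij_betw_def)

lemma h_eq_iff: "i < n \<Longrightarrow> j < n \<Longrightarrow> h i = h j \<longleftrightarrow> i = j"
  using bij_h by (auto simp: bij_betw_def inj_on_def)

lemma obtain_index:
  assumes "y \<in> A"
  obtains i where "i < n" and "y = h i"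
  using assms bij_h by (auto simp: bij_betw_def)

lemma finite_A: "finite A"
  using bij_h bij_betw_finite by blast

lemma rotation_h: "i < n \<Longrightarrow> rotation (h i) = h (Suc i mod n)"
  using h_in_A bij_h by (simp add: rotation_def bij_betw_inv_into_left)

lemma rotation_pow_h: "i < n \<Longrightarrow> (rotation ^^ k) (h i) = h ((i + k) mod n)"
proof (induction k)
  case (Suc k)
  have "(rotation ^^ Suc k) (h i) = h (Suc ((i + k) mod n) mod n)"
    using Suc two_le_n by (simp add: rotation_h)
  then show ?case by (simp add: mod_Suc_eq)
qed simp

lemma rotation_pow_notin: "y \<notin> A \<Longrightarrow> (rotation ^^ k) y = y"
  by (induction k) (simp_all add: rotation_def)

lemma rotation_pow_n: "rotation ^^ n = id"
proof
  fix y show "(rotation ^^ n) y = id y"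
    by (cases "y \<in> A") (auto elim: obtain_index simp: rotation_pow_h rotation_pow_notin)
qed

lemma rotation_pow_inverse: "k \<le> n \<Longrightarrow> (rotation ^^ k) ((rotation ^^ (n - k)) y) = y"
  using rotation_pow_n funpow_add[of k "n - k" rotation] by (metis comp_apply id_apply le_add_diff_inverse)

lemma inj_rotation_pow: "k \<le> n \<Longrightarrow> inj (rotation ^^ k)"
  using rotation_pow_inverse[of "n - k"] by (metis diff_diff_cancel diff_le_self injI)

lemma rotation_permutes: "rotation permutes A"
proof (rule bij_imp_permutes)
  have "rotation ` A = A"
  proof
    show "rotation ` A \<subseteq> A"
      using two_le_n by (auto elim!: obtain_index simp: rotation_h h_in_A)
    show "A \<subseteq> rotation ` A"
    proof
      fix y assume "y \<in> A"
      then obtain i where "i < n" "y = h i" by (rule obtain_index)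
      then have "(rotation ^^ (n - 1)) y \<in> A" using two_le_n by (simp add: rotation_pow_h h_in_A)
      moreover have "rotation ((rotation ^^ (n - 1)) y) = y"
        using rotation_pow_inverse[of 1] two_le_n by simp
      ultimately show "y \<in> rotation ` A" by (metis image_eqI)
    qed
  qed
  moreover have "inj rotation" using inj_rotation_pow[of 1] two_le_n by simp
  ultimately show "bij_betw rotation A A" by (auto simp: bij_betw_def inj_def inj_on_def)
qed (simp add: rotation_def)

lemma rotation_eq_transpose: "n = 2 \<Longrightarrow> rotation = Transposition.transpose (h 0) (h 1)"
proof
  fix y assume n: "n = 2"
  show "rotation y = Transposition.transpose (h 0) (h 1) y"
  proof (cases "y \<in> A")
    case True
    then obtain i where "i < 2" "y = h i" using n by (auto elim: obtain_index)
    then show ?thesis using n rotation_h h_eq_iff by (auto simp: less_2_cases_iff)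
  next
    case False
    moreover have "h 0 \<in> A" "h 1 \<in> A" using h_in_A two_le_n by auto
    ultimately show ?thesis by (auto simp: rotation_def transpose_def)
  qed
qed

lemma rotation_neq_transpose: "3 \<le> n \<Longrightarrow> rotation \<noteq> Transposition.transpose (h 0) (h 1)"
proof
  assume n: "3 \<le> n" and e: "rotation = Transposition.transpose (h 0) (h 1)"
  have "h 2 \<noteq> h 0" "h 2 \<noteq> h 1" using n h_eq_iff[of 2 0] h_eq_iff[of 2 1] by auto
  then have "rotation (h 2) = h 2" using e by simp
  moreover have "rotation (h 2) = h (3 mod n)" using n rotation_h[of 2] by (simp add: numeral_3_eq_3)
  moreover have "3 mod n \<noteq> 2" using n by (cases "n = 3") simp_all
  ultimately show False using n h_eq_iff[of "3 mod n" 2] by simp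
qed

text \<open>A transposition of two consecutive elements and the rotation of the enumeration generate
  every permutation of $A$: conjugating the transposition by powers of the rotation gives all
  transpositions of neighbours, and these generate all transpositions.\<close>
context
  fixes Q :: "('a \<Rightarrow> 'a) set"
  assumes comp_closed: "\<And>f g. f \<in> Q \<Longrightarrow> g \<in> Q \<Longrightarrow> f \<circ> g \<in> Q"
    and transpose_mem: "Transposition.transpose (h 0) (h 1) \<in> Q"
    and rotation_mem: "rotation \<in> Q"
begin

lemma rotation_pow_mem: "rotation ^^ k \<in> Q"
proof -
  have Suc_mem: "rotation ^^ Suc k \<in> Q" for k
  proof (induction k)
    case (Suc k) then show ?case using comp_closed[OF rotation_mem] by (simp only: funpow.simps(2))
  qed (simp add: rotation_mem)
  have "Suc (n - 1) = n" using two_le_n by simp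
  then have "id \<in> Q" using Suc_mem[of "n - 1"] rotation_pow_n by simp
  then show ?thesis using Suc_mem by (cases k) simp_all
qed

lemma adjacent_transpose_mem:
  assumes "Suc k < n"
  shows "Transposition.transpose (h k) (h (Suc k)) \<in> Q"
proof -
  have "(rotation ^^ k) \<circ> Transposition.transpose (h 0) (h 1) \<circ> (rotation ^^ (n - k))
      = Transposition.transpose ((rotation ^^ k) (h 0)) ((rotation ^^ k) (h 1))"
    using assms by (intro transpose_conj inj_rotation_pow rotation_pow_inverse) simp_all
  also have "\<dots> = Transposition.transpose (h k) (h (Suc k))"
    using assms two_le_n by (simp add: rotation_pow_h)
  finally show ?thesis using comp_closed[OF comp_closed[OF rotation_pow_mem transpose_mem] rotation_pow_mem]
    by metis
qed

lemma transpose_h_mem: "i < j \<Longrightarrow> j < n \<Longrightarrow> Transposition.transpose (h i) (h j) \<in> Q"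
proof (induction j)
  case (Suc k)
  show ?case
  proof (cases "i = k")
    case True then show ?thesis using adjacent_transpose_mem Suc.prems by simp
  next
    case False
    let ?s = "Transposition.transpose (h k) (h (Suc k))"
    have IH: "Transposition.transpose (h i) (h k) \<in> Q" using Suc False by simp
    have s: "?s \<in> Q" using adjacent_transpose_mem Suc.prems by simp
    have "h (Suc k) \<noteq> h i" "h k \<noteq> h i" using Suc.prems False h_eq_iff by auto
    then have "?s \<circ> Transposition.transpose (h i) (h k) \<circ> ?s = Transposition.transpose (h i) (h (Suc k))"
      using transpose_comp_triple[of "h (Suc k)" "h i" "h k"] by (simp add: transpose_commute)
    then show ?thesis using comp_closed[OF comp_closed[OF s IH] s] by simp
  qed
qed simp

lemma transpose_in_A_mem:
  assumes "a \<in> A" and "b \<in> A"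
  shows "Transposition.transpose a b \<in> Q"
proof -
  obtain i j where ij: "i < n" "j < n" "a = h i" "b = h j" using assms by (metis obtain_index)
  consider "i < j" | "i = j" | "j < i" by linarith
  then show ?thesis
  proof cases
    case 2 then show ?thesis using ij rotation_pow_mem[of 0] by simp
  qed (use ij transpose_h_mem transpose_commute in metis)+
qed

lemma permutes_mem:
  assumes "p permutes A"
  shows "p \<in> Q"
  using assms finite_A
proof (induction p rule: permutes_induct)
  case id then show ?case using rotation_pow_mem[of 0] by (simp add: id_def)
next
  case (swap a b p) then show ?case using comp_closed transpose_in_A_mem by blast
qed

end

end

lemma enumeration_exists:
  assumes "finite A" and "2 \<le> card A"
  obtains h where "enumeration A h (card A)"
proof -
  obtain h where "bij_betw h {0..<card A} A" using ex_bij_betw_nat_finite assms(1) by blast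
  then have "enumeration A h (card A)" using assms(2) by unfold_locales (simp add: atLeast0LessThan)
  then show ?thesis using that by blast
qed

section \<open>Elements of maximal rank\<close>

definition maxrank :: "'a set \<Rightarrow> 'a set \<Rightarrow> ('a \<Rightarrow> 'a) set" where
  "maxrank X A = {f \<in> RegTXA X A. f ` A = A}"

definition outer_maps :: "'a set \<Rightarrow> 'a set \<Rightarrow> ('a \<Rightarrow> 'a) set" where
  "outer_maps X A = (X - A) \<rightarrow>\<^sub>E A"

definition mk_maxrank :: "'a set \<Rightarrow> 'a set \<Rightarrow> ('a \<Rightarrow> 'a) \<Rightarrow> ('a \<Rightarrow> 'a) \<Rightarrow> ('a \<Rightarrow> 'a)" where
  "mk_maxrank X A p w = restrict (\<lambda>x. if x \<in> A then p x else p (w x)) X"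

lemma card_outer_maps: "finite X \<Longrightarrow> card (outer_maps X A) = card A ^ card (X - A)"
  unfolding outer_maps_def by (simp add: card_PiE)

lemma finite_outer_maps: "finite X \<Longrightarrow> A \<subseteq> X \<Longrightarrow> finite (outer_maps X A)"
  unfolding outer_maps_def by (intro finite_PiE) (auto intro: finite_subset)

lemma outer_maps_const: "a \<in> A \<Longrightarrow> restrict (\<lambda>_. a) (X - A) \<in> outer_maps X A"
  by (simp add: outer_maps_def)

lemma outer_maps_singleton: "X \<subseteq> A \<Longrightarrow> outer_maps X A = {\<lambda>_. undefined}"
proof -
  assume "X \<subseteq> A"
  then have "X - A = {}" by blast
  then show ?thesis unfolding outer_maps_def by (simp only: PiE_empty_domain)
qed

context subset_TXA
begin

lemma mk_maxrank_apply:
  "x \<in> A \<Longrightarrow> mk_maxrank X A p w x = p x"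
  "x \<in> X \<Longrightarrow> x \<notin> A \<Longrightarrow> mk_maxrank X A p w x = p (w x)"
  "x \<notin> X \<Longrightarrow> mk_maxrank X A p w x = undefined"
  using A_subset by (auto simp: mk_maxrank_def)

lemma mk_maxrank_maxrank:
  assumes p: "p permutes A" and w: "w \<in> outer_maps X A"
  shows "mk_maxrank X A p w \<in> maxrank X A"
proof -
  have img: "mk_maxrank X A p w ` A = A"
    using permutes_image[OF p] by (auto simp: mk_maxrank_apply)
  have in_A: "mk_maxrank X A p w x \<in> A" if "x \<in> X" for x
  proof (cases "x \<in> A")
    case True then show ?thesis using p by (simp add: mk_maxrank_apply permutes_in_image)
  next
    case False
    then have "w x \<in> A" using w that by (auto simp: outer_maps_def)
    then show ?thesis using p False that by (simp add: mk_maxrank_apply permutes_in_image)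
  qed
  then have vals: "mk_maxrank X A p w ` X \<subseteq> A" by blast
  have "mk_maxrank X A p w \<in> X \<rightarrow>\<^sub>E X"
    using in_A A_subset by (intro PiE_I) (auto simp: mk_maxrank_apply)
  then show ?thesis using img vals unfolding maxrank_def RegTXA_iff by simp
qed

lemma comp_on_mk_maxrank:
  assumes t: "t permutes A" and v: "v \<in> outer_maps X A"
  shows "comp_on X (mk_maxrank X A p w) (mk_maxrank X A t v) = mk_maxrank X A (p \<circ> t) v"
proof
  fix x
  have "t y \<in> A" if "y \<in> A" for y using t that by (simp add: permutes_in_image)
  moreover have "v x \<in> A" if "x \<in> X" "x \<notin> A" using v that by (auto simp: outer_maps_def)
  ultimately show "comp_on X (mk_maxrank X A p w) (mk_maxrank X A t v) x = mk_maxrank X A (p \<circ> t) v x"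
    using A_subset by (cases "x \<in> X"; cases "x \<in> A") (auto simp: mk_maxrank_apply comp_on_def)
qed

lemma mk_maxrank_inj:
  assumes p: "p permutes A" and q: "q permutes A"
    and w: "w \<in> outer_maps X A" and v: "v \<in> outer_maps X A"
    and e: "mk_maxrank X A p w = mk_maxrank X A q v"
  shows "p = q" and "w = v"
proof -
  show pq: "p = q"
  proof
    fix x show "p x = q x"
      using fun_cong[OF e, of x] p q by (cases "x \<in> A") (auto simp: mk_maxrank_apply permutes_not_in)
  qed
  show "w = v"
  proof
    fix x show "w x = v x"
    proof (cases "x \<in> X - A")
      case True
      then have "p (w x) = p (v x)" using fun_cong[OF e, of x] pq by (simp add: mk_maxrank_apply)
      then show ?thesis using p by (metis permutes_inverses(2))
    next
      case False then show ?thesis using w v by (auto simp: outer_maps_def PiE_def extensional_def)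
    qed
  qed
qed

lemma comp_on_maxrank:
  assumes "f \<in> maxrank X A" and "g \<in> maxrank X A"
  shows "comp_on X f g \<in> maxrank X A"
proof -
  have "comp_on X f g ` A = f ` g ` A" using A_subset by (force simp: comp_on_def)
  then show ?thesis using assms comp_on_RegTXA unfolding maxrank_def by auto
qed

lemma generators_not_subset_maxrank:
  assumes "generates (comp_on X) (RegTXA X A) G" and "a \<in> A" "b \<in> A" "a \<noteq> b"
  shows "\<not> G \<subseteq> maxrank X A"
proof
  assume "G \<subseteq> maxrank X A"
  then have "RegTXA X A \<subseteq> maxrank X A"
    using generators_subset(2)[OF assms(1)] sg_gen_least[of G "maxrank X A"] comp_on_maxrank by blast
  then have "restrict (\<lambda>_. a) X \<in> maxrank X A" using restrict_const_RegTXA[OF assms(2)] by blast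
  moreover have "restrict (\<lambda>_. a) X ` A = {a}" using assms(2) A_subset by auto
  ultimately show False using assms(2-4) unfolding maxrank_def by auto
qed

end

locale finite_TXA = subset_TXA +
  assumes finite_X: "finite X"
begin

lemma finite_A: "finite A"
  using A_subset finite_X finite_subset by blast

lemma maxrank_obtain_mk_maxrank:
  assumes f: "f \<in> maxrank X A"
  obtains p w where "p permutes A" and "w \<in> outer_maps X A" and "f = mk_maxrank X A p w"
proof -
  have fR: "f \<in> RegTXA X A" and fA: "f ` A = A" using f unfolding maxrank_def by auto
  note f' = RegTXA_D[OF fR]
  have "inj_on f A" using finite_A fA by (intro eq_card_imp_inj_on) simp_all
  define p where "p x = (if x \<in> A then f x else x)" for x
  have "bij_betw p A A" using \<open>inj_on f A\<close> fA unfolding bij_betw_def inj_on_def p_def by auto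
  then have p: "p permutes A" by (rule bij_imp_permutes) (simp add: p_def)
  define w where "w = restrict (\<lambda>x. inv_into A f (f x)) (X - A)"
  have fx: "f x \<in> f ` A" if "x \<in> X" for x using f'(3) that by auto
  have w: "w \<in> outer_maps X A"
    using fx by (auto simp: outer_maps_def w_def inv_into_into)
  have "f = mk_maxrank X A p w"
  proof
    fix x show "f x = mk_maxrank X A p w x"
      using f'(1) fx[of x] by (cases "x \<in> X"; cases "x \<in> A")
        (auto simp: mk_maxrank_apply p_def w_def f_inv_into_f inv_into_into PiE_def extensional_def)
  qed
  then show ?thesis using that p w by blast
qed

lemma maxrank_comp_on_factors:
  assumes f: "f \<in> RegTXA X A" and g: "g \<in> RegTXA X A" and fg: "comp_on X f g \<in> maxrank X A"
  shows "f \<in> maxrank X A" and "g \<in> maxrank X A"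
proof -
  have "comp_on X f g ` A = f ` g ` A" using A_subset by (force simp: comp_on_def)
  then have e: "f ` g ` A = A" using fg unfolding maxrank_def by simp
  have gA: "g ` A \<subseteq> A" using RegTXA_D(2)[OF g] A_subset by auto
  have "card A \<le> card (g ` A)" using e card_image_le[of "g ` A" f] finite_A gA finite_subset by metis
  then have "g ` A = A" using gA finite_A by (metis card_seteq)
  then show "f \<in> maxrank X A" "g \<in> maxrank X A" using e f g unfolding maxrank_def by simp_all
qed

lemma sg_gen_Int_maxrank:
  assumes G: "G \<subseteq> RegTXA X A"
  shows "sg_gen (comp_on X) G \<inter> maxrank X A \<subseteq> sg_gen (comp_on X) (G \<inter> maxrank X A)"
proof -
  have "x \<in> RegTXA X A \<and> (x \<in> maxrank X A \<longrightarrow> x \<in> sg_gen (comp_on X) (G \<inter> maxrank X A))"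
    if "x \<in> sg_gen (comp_on X) G" for x
    using that
  proof induction
    case (base x) then show ?case using G by (auto intro: sg_gen.base)
  next
    case (mult x y)
    then show ?case
      using maxrank_comp_on_factors[of x y] comp_on_RegTXA[of x y] by (auto intro: sg_gen.mult)
  qed
  then show ?thesis by blast
qed

lemma maxrank_subset_sg_gen_Int:
  assumes "generates (comp_on X) (RegTXA X A) G"
  shows "maxrank X A \<subseteq> sg_gen (comp_on X) (G \<inter> maxrank X A)"
proof -
  note G = generators_subset[OF assms]
  have "maxrank X A \<subseteq> sg_gen (comp_on X) G \<inter> maxrank X A" using G(2) by (auto simp: maxrank_def)
  then show ?thesis using sg_gen_Int_maxrank[OF G(1)] by blast
qed

lemma sg_gen_maxrank_outer_map:
  assumes H: "H \<subseteq> maxrank X A" and f: "f \<in> sg_gen (comp_on X) H"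
  obtains p q w where "p permutes A" "q permutes A" "w \<in> outer_maps X A"
    and "f = mk_maxrank X A p w" and "mk_maxrank X A q w \<in> H"
proof -
  have "\<exists>p q w. p permutes A \<and> q permutes A \<and> w \<in> outer_maps X A
      \<and> f = mk_maxrank X A p w \<and> mk_maxrank X A q w \<in> H"
    using f
  proof induction
    case (base f)
    then obtain p w where "p permutes A" "w \<in> outer_maps X A" "f = mk_maxrank X A p w"
      using H maxrank_obtain_mk_maxrank by blast
    then show ?case using base by blast
  next
    case (mult f g)
    then obtain p w q v r where "p permutes A" "f = mk_maxrank X A p w"
      and "q permutes A" "r permutes A" "v \<in> outer_maps X A" "g = mk_maxrank X A q v"
      "mk_maxrank X A r v \<in> H" by blast
    then show ?case using comp_on_mk_maxrank by (metis permutes_compose)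
  qed
  then show ?thesis using that by blast
qed

lemma card_outer_maps_le:
  assumes G: "generates (comp_on X) (RegTXA X A) G"
  shows "card (outer_maps X A) \<le> card (G \<inter> maxrank X A)"
proof -
  have "\<exists>q. q permutes A \<and> mk_maxrank X A q w \<in> G \<inter> maxrank X A" if w: "w \<in> outer_maps X A" for w
  proof -
    have "mk_maxrank X A id w \<in> sg_gen (comp_on X) (G \<inter> maxrank X A)"
      using mk_maxrank_maxrank[OF permutes_id w] maxrank_subset_sg_gen_Int[OF G] by blast
    then obtain p q v where "p permutes A" "q permutes A" "v \<in> outer_maps X A"
      and "mk_maxrank X A id w = mk_maxrank X A p v" "mk_maxrank X A q v \<in> G \<inter> maxrank X A"
      by (rule sg_gen_maxrank_outer_map[OF Int_lower2])
    then show ?thesis using mk_maxrank_inj(2)[OF permutes_id _ w] by blast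
  qed
  then obtain \<sigma> where \<sigma>: "\<And>w. w \<in> outer_maps X A \<Longrightarrow>
      \<sigma> w permutes A \<and> mk_maxrank X A (\<sigma> w) w \<in> G \<inter> maxrank X A"
    by metis
  have "inj_on (\<lambda>w. mk_maxrank X A (\<sigma> w) w) (outer_maps X A)"
    using \<sigma> mk_maxrank_inj(2) by (intro inj_onI) blast
  moreover have "finite (G \<inter> maxrank X A)"
    using generators_subset(1)[OF G] finite_RegTXA[OF finite_X] finite_subset by blast
  ultimately show ?thesis using \<sigma> by (intro card_inj_on_le) auto
qed

text \<open>For $|A| \ge 3$ the maximal-rank part contains two non-commuting transpositions, whereas a
  single generator generates a commutative subsemigroup.\<close>
lemma two_le_card_Int_maxrank:
  assumes G: "generates (comp_on X) (RegTXA X A) G" and A3: "3 \<le> card A"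
  shows "2 \<le> card (G \<inter> maxrank X A)"
proof (rule ccontr)
  assume "\<not> 2 \<le> card (G \<inter> maxrank X A)"
  then have le1: "card (G \<inter> maxrank X A) \<le> Suc 0" by simp
  obtain a b c where abc: "a \<in> A" "b \<in> A" "c \<in> A" "a \<noteq> b" "b \<noteq> c" "a \<noteq> c"
  proof -
    obtain T where T: "T \<subseteq> A" "card T = 3" using obtain_subset_with_card_n[OF A3] by metis
    then obtain a b c where "T = {a, b, c}" "a \<noteq> b" "b \<noteq> c" "a \<noteq> c"
      unfolding card_3_iff by blast
    then show ?thesis using that T(1) by auto
  qed
  obtain w where w: "w \<in> outer_maps X A" using outer_maps_const[OF abc(1)] by blast
  define x where "x = mk_maxrank X A (Transposition.transpose a b) w"
  define y where "y = mk_maxrank X A (Transposition.transpose b c) w"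
  have ab: "Transposition.transpose a b permutes A" and bc: "Transposition.transpose b c permutes A"
    using abc by (simp_all add: permutes_swap_id)
  have xy: "x \<in> sg_gen (comp_on X) (G \<inter> maxrank X A)" "y \<in> sg_gen (comp_on X) (G \<inter> maxrank X A)"
    using maxrank_subset_sg_gen_Int[OF G] mk_maxrank_maxrank[OF ab w] mk_maxrank_maxrank[OF bc w]
    unfolding x_def y_def by blast+
  then have "G \<inter> maxrank X A \<noteq> {}" using sg_gen_empty by (metis empty_iff)
  moreover have "finite (G \<inter> maxrank X A)"
    using generators_subset(1)[OF G] finite_RegTXA[OF finite_X] finite_subset by blast
  then have "\<forall>f\<in>G \<inter> maxrank X A. \<forall>f'\<in>G \<inter> maxrank X A. f = f'"
    using le1 card_le_Suc0_iff_eq by blast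
  ultimately obtain g where g: "G \<inter> maxrank X A = {g}" by blast
  have "g ` X \<subseteq> X" using g generators_subset(1)[OF G] RegTXA_D(1) by (auto simp: PiE_iff)
  moreover have "x \<in> sg_gen (comp_on X) {g}" "y \<in> sg_gen (comp_on X) {g}" using xy g by simp_all
  ultimately have "comp_on X x y = comp_on X y x" by (rule sg_gen_singleton_commute)
  then have "mk_maxrank X A (Transposition.transpose a b \<circ> Transposition.transpose b c) w
      = mk_maxrank X A (Transposition.transpose b c \<circ> Transposition.transpose a b) w"
    unfolding x_def y_def using comp_on_mk_maxrank[OF bc w] comp_on_mk_maxrank[OF ab w] by simp
  then show False
    using mk_maxrank_inj(1)[OF permutes_compose[OF bc ab] permutes_compose[OF ab bc] w w]
      transpose_comp_not_commute[OF abc(4-6)] by blast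
qed

lemma card_generators_lower:
  assumes G: "generates (comp_on X) (RegTXA X A) G" and A2: "2 \<le> card A"
  shows "finite G" and "1 + card (outer_maps X A) \<le> card G" and "3 \<le> card A \<Longrightarrow> 3 \<le> card G"
proof -
  note G' = generators_subset[OF G]
  show fin: "finite G" using G'(1) finite_RegTXA[OF finite_X] finite_subset by blast
  obtain a b where "a \<in> A" "b \<in> A" "a \<noteq> b"
  proof -
    obtain T where T: "T \<subseteq> A" "card T = 2" using obtain_subset_with_card_n[OF A2] by metis
    then obtain a b where "T = {a, b}" "a \<noteq> b" unfolding card_2_iff by blast
    then show ?thesis using that T(1) by auto
  qed
  then have "G - maxrank X A \<noteq> {}" using generators_not_subset_maxrank[OF G] by blast
  then have "1 \<le> card (G - maxrank X A)" using fin by (simp add: Suc_le_eq card_gt_0_iff)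
  moreover have "card G = card (G \<inter> maxrank X A) + card (G - maxrank X A)"
    using fin by (rule card_Int_Diff)
  ultimately show "1 + card (outer_maps X A) \<le> card G" and "3 \<le> card A \<Longrightarrow> 3 \<le> card G"
    using card_outer_maps_le[OF G] two_le_card_Int_maxrank[OF G] by linarith+
qed

end

section \<open>Generating sets\<close>

definition collapse :: "'a set \<Rightarrow> 'a set \<Rightarrow> 'a \<Rightarrow> 'a \<Rightarrow> 'a \<Rightarrow> 'a" where
  "collapse X A c d = restrict (\<lambda>x. if x \<in> A - {c} then x else d) X"

context subset_TXA
begin

lemma collapse_RegTXA:
  assumes "c \<in> A" "d \<in> A" "c \<noteq> d"
  shows "collapse X A c d \<in> RegTXA X A" and "collapse X A c d \<notin> maxrank X A"
proof -
  have vals: "collapse X A c d ` X \<subseteq> A - {c}" using assms by (auto simp: collapse_def)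
  have fix_A: "collapse X A c d y = y" if "y \<in> A - {c}" for y
    using that A_subset by (auto simp: collapse_def)
  have "collapse X A c d ` X \<subseteq> collapse X A c d ` A"
  proof
    fix y assume "y \<in> collapse X A c d ` X"
    then have "y \<in> A - {c}" using vals by blast
    then show "y \<in> collapse X A c d ` A" using fix_A by (metis DiffD1 image_eqI)
  qed
  moreover have "collapse X A c d \<in> X \<rightarrow>\<^sub>E X" using vals A_subset assms(2) by (auto simp: collapse_def)
  ultimately show "collapse X A c d \<in> RegTXA X A" using vals by (auto simp: RegTXA_iff)
  have "collapse X A c d ` A \<noteq> A" using vals assms(1) A_subset by blast
  then show "collapse X A c d \<notin> maxrank X A" by (simp add: maxrank_def)
qed

lemma collapse_conj:
  assumes p: "p permutes A" and ab: "a \<in> A" "b \<in> A" "a \<noteq> b"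
    and v: "v = restrict (\<lambda>_. p b) (X - A)"
  shows "comp_on X (comp_on X (mk_maxrank X A p v) (collapse X A a b)) (mk_maxrank X A (inv p) v)
    = collapse X A (p a) (p b)"
proof
  fix x
  have inv: "inv p (p y) = y" "p (inv p y) = y" for y using p by (simp_all add: permutes_inverses)
  have inv_A: "inv p y \<in> A \<longleftrightarrow> y \<in> A" for y by (simp add: permutes_inv p permutes_in_image)
  have "b \<in> X" using ab A_subset by blast
  show "comp_on X (comp_on X (mk_maxrank X A p v) (collapse X A a b)) (mk_maxrank X A (inv p) v) x
      = collapse X A (p a) (p b) x"
  proof (cases "x \<in> X")
    case X: True
    show ?thesis
    proof (cases "x \<in> A")
      case True
      then have "inv p x \<in> X" "inv p x \<in> A" using inv_A A_subset by auto
      moreover have "inv p x = a \<longleftrightarrow> x = p a" using inv by metis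
      ultimately show ?thesis using X True ab inv A_subset
        by (auto simp: collapse_def mk_maxrank_apply)
    next
      case False
      then have "mk_maxrank X A (inv p) v x = b" using X v inv by (simp add: mk_maxrank_apply)
      then show ?thesis using X False ab \<open>b \<in> X\<close> by (simp add: collapse_def mk_maxrank_apply)
    qed
  qed (simp add: collapse_def comp_on_def)
qed

text \<open>Redefining $f$ at a point $b$ whose fibre meets $A$ twice, to take a value $c \in A$ outside
  $f(A)$, raises the rank by one; composing with a collapse undoes this.\<close>
lemma fun_upd_RegTXA:
  assumes f: "f \<in> RegTXA X A" and ab: "a \<in> A" "b \<in> A" "a \<noteq> b" "f a = f b"
    and c: "c \<in> A" "c \<notin> f ` A"
  shows "f(b := c) \<in> RegTXA X A" and "f(b := c) ` A = insert c (f ` A)"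
    and "f = comp_on X (collapse X A c (f a)) (f(b := c))"
proof -
  note f' = RegTXA_D[OF f]
  have bcX: "b \<in> X" "c \<in> X" using ab(2) c(1) A_subset by auto
  have "f a \<in> f ` (A - {b})" by (rule image_eqI[OF refl]) (use ab in auto)
  then have "f ` (A - {b}) = f ` A" using ab(2,4) by (metis image_insert insert_Diff insert_absorb)
  then show img: "f(b := c) ` A = insert c (f ` A)"
    using ab(2) fun_upd_image[of f b c A] by (simp only: if_True)
  have "f(b := c) ` X \<subseteq> insert c (f ` X)"
  proof (rule image_subsetI)
    fix x assume "x \<in> X"
    then show "(f(b := c)) x \<in> insert c (f ` X)" by (cases "x = b") auto
  qed
  moreover have "insert c (f ` X) \<subseteq> A" and "insert c (f ` X) \<subseteq> f(b := c) ` A"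
    using f'(2,3) c(1) unfolding img by auto
  moreover have "f(b := c) \<in> X \<rightarrow>\<^sub>E X"
    using PiE_fun_upd[OF bcX(2) f'(1), of b] by (simp only: insert_absorb[OF bcX(1)])
  ultimately show "f(b := c) \<in> RegTXA X A" unfolding RegTXA_iff by (meson subset_trans)
  show "f = comp_on X (collapse X A c (f a)) (f(b := c))"
  proof
    fix x show "f x = comp_on X (collapse X A c (f a)) (f(b := c)) x"
    proof (cases "x \<in> X")
      case x: True
      show ?thesis
      proof (cases "x = b")
        case True then show ?thesis using x bcX ab(4) by (simp add: collapse_def)
      next
        case False
        have "f x \<in> f ` A" using f'(3) x by blast
        then have "f x \<in> A - {c}" "f x \<in> X" using f'(2) c(2) A_subset x by auto
        then show ?thesis using x False by (simp add: collapse_def)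
      qed
    qed (use f'(1) in \<open>simp add: comp_on_def PiE_def extensional_def\<close>)
  qed
qed

end

context finite_TXA
begin

lemma RegTXA_factor_collapse:
  assumes f: "f \<in> RegTXA X A" and not_max: "f ` A \<noteq> A"
  obtains c d g where "c \<in> A" "d \<in> A" "c \<noteq> d" "g \<in> RegTXA X A"
    and "card (f ` A) < card (g ` A)" and "f = comp_on X (collapse X A c d) g"
proof -
  have fA: "f ` A \<subseteq> A" using RegTXA_D(2)[OF f] A_subset by blast
  then obtain c where c: "c \<in> A" "c \<notin> f ` A" using not_max by blast
  have "f ` A \<subset> A" using fA not_max by blast
  then have "card (f ` A) < card A" by (rule psubset_card_mono[OF finite_A])
  then have "\<not> inj_on f A" using card_image[of f A] by auto
  then obtain a b where ab: "a \<in> A" "b \<in> A" "a \<noteq> b" "f a = f b" unfolding inj_on_def by blast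
  note upd = fun_upd_RegTXA[OF f ab c]
  have "card (f(b := c) ` A) = Suc (card (f ` A))" using upd(2) c finite_A by simp
  moreover have "f a \<in> A" "c \<noteq> f a" using fA ab(1) c by auto
  ultimately show ?thesis using that[OF c(1) _ _ upd(1)] upd(3) by simp
qed

lemma RegTXA_subset_closure:
  assumes closed: "\<And>f g. f \<in> S \<Longrightarrow> g \<in> S \<Longrightarrow> comp_on X f g \<in> S"
    and max: "maxrank X A \<subseteq> S"
    and col: "\<And>c d. c \<in> A \<Longrightarrow> d \<in> A \<Longrightarrow> c \<noteq> d \<Longrightarrow> collapse X A c d \<in> S"
  shows "RegTXA X A \<subseteq> S"
proof
  fix f assume "f \<in> RegTXA X A"
  then show "f \<in> S"
  proof (induction "card A - card (f ` A)" arbitrary: f rule: less_induct)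
    case less
    show ?case
    proof (cases "f ` A = A")
      case True then show ?thesis using less.prems max by (auto simp: maxrank_def)
    next
      case False
      then obtain c d g where cd: "c \<in> A" "d \<in> A" "c \<noteq> d" and g: "g \<in> RegTXA X A"
        and card_less: "card (f ` A) < card (g ` A)" and f: "f = comp_on X (collapse X A c d) g"
        using RegTXA_factor_collapse[OF less.prems] by blast
      have "g ` A \<subseteq> A" using RegTXA_D(2)[OF g] A_subset by blast
      then have "card (g ` A) \<le> card A" using finite_A by (simp add: card_mono)
      then have "g \<in> S" using less.hyps[OF _ g] card_less by linarith
      then show ?thesis using f closed col[OF cd] by simp
    qed
  qed
qed

end

locale enumerated_TXA = finite_TXA X A + enumeration A h "card A"
  for X A :: "'a set" and h :: "nat \<Rightarrow> 'a"
begin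

lemma h01: "h 0 \<in> A" "h 1 \<in> A" "h 1 \<noteq> h 0"
  using h_in_A h_eq_iff[of 1 0] two_le_n by auto

lemma maxrank_subset_sg_gen:
  assumes outer: "\<And>w. w \<in> outer_maps X A \<Longrightarrow> \<exists>p. p permutes A \<and> mk_maxrank X A p w \<in> G"
    and w\<^sub>1: "w\<^sub>1 \<in> outer_maps X A" "mk_maxrank X A (Transposition.transpose (h 0) (h 1)) w\<^sub>1 \<in> G"
    and w\<^sub>2: "w\<^sub>2 \<in> outer_maps X A" "mk_maxrank X A rotation w\<^sub>2 \<in> G"
  shows "maxrank X A \<subseteq> sg_gen (comp_on X) G"
proof -
  let ?S = "sg_gen (comp_on X) G"
  define Q where "Q = {p. p permutes A \<and> (\<exists>v\<in>outer_maps X A. mk_maxrank X A p v \<in> ?S)}"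
  have Q: "p \<in> Q" if "p permutes A" for p
  proof (rule permutes_mem[OF _ _ _ that])
    fix f g assume "f \<in> Q" "g \<in> Q"
    then obtain v u where f: "f permutes A" "mk_maxrank X A f v \<in> ?S"
      and g: "g permutes A" "u \<in> outer_maps X A" "mk_maxrank X A g u \<in> ?S"
      unfolding Q_def by blast
    have "mk_maxrank X A (f \<circ> g) u \<in> ?S"
      using sg_gen.mult[OF f(2) g(3)] comp_on_mk_maxrank[OF g(1,2)] by simp
    then show "f \<circ> g \<in> Q" unfolding Q_def using f(1) g(1,2) by (auto intro: permutes_compose)
  next
    show "Transposition.transpose (h 0) (h 1) \<in> Q"
      using w\<^sub>1 h01 unfolding Q_def by (auto simp: permutes_swap_id intro: sg_gen.base)
    show "rotation \<in> Q" using w\<^sub>2 rotation_permutes unfolding Q_def by (auto intro: sg_gen.base)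
  qed
  have "mk_maxrank X A p w \<in> ?S" if p: "p permutes A" and w: "w \<in> outer_maps X A" for p w
  proof -
    obtain r where r: "r permutes A" "mk_maxrank X A r w \<in> G" using outer[OF w] by blast
    have "p \<circ> inv r permutes A" using p r(1) by (simp add: permutes_compose permutes_inv)
    then obtain v where "mk_maxrank X A (p \<circ> inv r) v \<in> ?S" using Q unfolding Q_def by blast
    then have "comp_on X (mk_maxrank X A (p \<circ> inv r) v) (mk_maxrank X A r w) \<in> ?S"
      using r(2) by (auto intro: sg_gen.intros)
    moreover have "p \<circ> inv r \<circ> r = p" using permutes_inv_o(2)[OF r(1)] by (simp add: comp_assoc)
    ultimately show ?thesis using comp_on_mk_maxrank[OF r(1) w] by simp
  qed
  then show ?thesis by (blast elim: maxrank_obtain_mk_maxrank)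
qed

lemma generates_RegTXAI:
  assumes G: "G \<subseteq> RegTXA X A" and e: "collapse X A (h 1) (h 0) \<in> G"
    and outer: "\<And>w. w \<in> outer_maps X A \<Longrightarrow> \<exists>p. p permutes A \<and> mk_maxrank X A p w \<in> G"
    and w\<^sub>1: "w\<^sub>1 \<in> outer_maps X A" "mk_maxrank X A (Transposition.transpose (h 0) (h 1)) w\<^sub>1 \<in> G"
    and w\<^sub>2: "w\<^sub>2 \<in> outer_maps X A" "mk_maxrank X A rotation w\<^sub>2 \<in> G"
  shows "generates (comp_on X) (RegTXA X A) G"
proof -
  let ?S = "sg_gen (comp_on X) G"
  have max: "maxrank X A \<subseteq> ?S" by (rule maxrank_subset_sg_gen[OF outer w\<^sub>1 w\<^sub>2])
  have "collapse X A c d \<in> ?S" if cd: "c \<in> A" "d \<in> A" "c \<noteq> d" for c d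
  proof -
    obtain p where p: "p permutes A" "p (h 1) = c" "p (h 0) = d"
      using permutes_map_pair[OF h01(2,1) cd(1,2) h01(3) cd(3)] by blast
    define v where "v = restrict (\<lambda>_. p (h 0)) (X - A)"
    have v: "v \<in> outer_maps X A" using p(3) cd(2) by (simp add: v_def outer_maps_def)
    have "mk_maxrank X A p v \<in> ?S" "mk_maxrank X A (inv p) v \<in> ?S"
      using max mk_maxrank_maxrank[OF p(1) v] mk_maxrank_maxrank[OF permutes_inv[OF p(1)] v] by auto
    then have "comp_on X (comp_on X (mk_maxrank X A p v) (collapse X A (h 1) (h 0)))
        (mk_maxrank X A (inv p) v) \<in> ?S"
      using e by (auto intro: sg_gen.intros)
    then show ?thesis using collapse_conj[OF p(1) h01(2,1,3) v_def] p(2,3) by simp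
  qed
  then have "RegTXA X A \<subseteq> ?S" using max by (intro RegTXA_subset_closure) (auto intro: sg_gen.mult)
  then show ?thesis using sg_gen_RegTXA[OF G] G unfolding generates_def by blast
qed

section \<open>The rank in the finite case\<close>

text \<open>For $A = X$ the only outer map is \<open>\<lambda>_. undefined\<close>.\<close>
definition full_generators :: "('a \<Rightarrow> 'a) set" where
  "full_generators = {collapse X A (h 1) (h 0),
    mk_maxrank X A (Transposition.transpose (h 0) (h 1)) (\<lambda>_. undefined),
    mk_maxrank X A rotation (\<lambda>_. undefined)}"

lemma generates_full_generators:
  assumes "X \<subseteq> A"
  shows "generates (comp_on X) (RegTXA X A) full_generators"
proof -
  have w: "(\<lambda>_. undefined) \<in> outer_maps X A" using outer_maps_singleton[OF assms] by simp
  have t: "Transposition.transpose (h 0) (h 1) permutes A" using h01 by (simp add: permutes_swap_id)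
  have e_mem: "collapse X A (h 1) (h 0) \<in> full_generators"
    and t_mem: "mk_maxrank X A (Transposition.transpose (h 0) (h 1)) (\<lambda>_. undefined) \<in> full_generators"
    and r_mem: "mk_maxrank X A rotation (\<lambda>_. undefined) \<in> full_generators"
    unfolding full_generators_def
    by (rule insertI1, rule insertI2[OF insertI1], rule insertI2[OF insertI2[OF insertI1]])
  have "mk_maxrank X A (Transposition.transpose (h 0) (h 1)) (\<lambda>_. undefined) \<in> RegTXA X A"
    "mk_maxrank X A rotation (\<lambda>_. undefined) \<in> RegTXA X A"
    using mk_maxrank_maxrank[OF t w] mk_maxrank_maxrank[OF rotation_permutes w]
    by (simp_all add: maxrank_def)
  then have "full_generators \<subseteq> RegTXA X A"
    using collapse_RegTXA(1)[OF h01(2,1,3)] unfolding full_generators_def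
    by (simp only: insert_subset empty_subsetI simp_thms)
  then show ?thesis
  proof (rule generates_RegTXAI[OF _ e_mem _ w t_mem w r_mem])
    show "\<exists>p. p permutes A \<and> mk_maxrank X A p v \<in> full_generators" if "v \<in> outer_maps X A" for v
    proof -
      have "v = (\<lambda>_. undefined)" using that outer_maps_singleton[OF assms] by simp
      then show ?thesis using t t_mem by blast
    qed
  qed
qed

lemma card_full_generators:
  assumes "X \<subseteq> A"
  shows "card full_generators = (if card A = 2 then 2 else 3)"
proof -
  let ?t = "mk_maxrank X A (Transposition.transpose (h 0) (h 1)) (\<lambda>_. undefined)"
  let ?r = "mk_maxrank X A rotation (\<lambda>_. undefined)"
  have w: "(\<lambda>_. undefined) \<in> outer_maps X A" using outer_maps_singleton[OF assms] by simp
  have t: "Transposition.transpose (h 0) (h 1) permutes A" using h01 by (simp add: permutes_swap_id)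
  have "?t \<in> maxrank X A" "?r \<in> maxrank X A"
    using mk_maxrank_maxrank[OF t w] mk_maxrank_maxrank[OF rotation_permutes w] by simp_all
  then have "collapse X A (h 1) (h 0) \<noteq> ?t" "collapse X A (h 1) (h 0) \<noteq> ?r"
    using collapse_RegTXA(2)[OF h01(2,1,3)] by auto
  moreover have "?t = ?r \<longleftrightarrow> card A = 2"
  proof
    assume "?t = ?r"
    then have "Transposition.transpose (h 0) (h 1) = rotation"
      by (rule mk_maxrank_inj(1)[OF t rotation_permutes w w])
    then show "card A = 2" using rotation_neq_transpose two_le_n by fastforce
  next
    assume "card A = 2"
    then show "?t = ?r" using rotation_eq_transpose by simp
  qed
  ultimately show ?thesis unfolding full_generators_def by auto
qed

lemma has_rank_full:
  assumes "X \<subseteq> A" and "3 \<le> card A"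
  shows "has_rank (comp_on X) (RegTXA X A) {..<3::nat}"
proof (rule has_rank_lessThanI[OF generates_full_generators[OF assms(1)]])
  show "card full_generators = 3" using card_full_generators[OF assms(1)] assms(2) by simp
  show "finite G \<and> 3 \<le> card G" if "generates (comp_on X) (RegTXA X A) G" for G
    using card_generators_lower[OF that] two_le_n assms(2) by simp
qed (simp add: full_generators_def)

text \<open>If $A \neq X$, the transposition and the rotation can be attached to two different outer
  maps.\<close>
definition outer_perm :: "('a \<Rightarrow> 'a) \<Rightarrow> 'a \<Rightarrow> 'a" where
  "outer_perm w = (if w = restrict (\<lambda>_. h 0) (X - A) then Transposition.transpose (h 0) (h 1)
    else if w = restrict (\<lambda>_. h 1) (X - A) then rotation else id)"

definition proper_generators :: "('a \<Rightarrow> 'a) set" where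
  "proper_generators = insert (collapse X A (h 1) (h 0))
    ((\<lambda>w. mk_maxrank X A (outer_perm w) w) ` outer_maps X A)"

lemma outer_perm_permutes: "outer_perm w permutes A"
  using h01 rotation_permutes by (simp add: outer_perm_def permutes_swap_id permutes_id)

lemma mk_maxrank_outer_perm_mem:
  "w \<in> outer_maps X A \<Longrightarrow> mk_maxrank X A (outer_perm w) w \<in> proper_generators"
  unfolding proper_generators_def by (rule insertI2, rule imageI)

lemma card_proper_generators: "card proper_generators = 1 + card A ^ card (X - A)"
proof -
  let ?M = "(\<lambda>w. mk_maxrank X A (outer_perm w) w) ` outer_maps X A"
  have M: "?M \<subseteq> maxrank X A" using mk_maxrank_maxrank[OF outer_perm_permutes] by auto
  have "inj_on (\<lambda>w. mk_maxrank X A (outer_perm w) w) (outer_maps X A)"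
    using mk_maxrank_inj(2)[OF outer_perm_permutes outer_perm_permutes] by (intro inj_onI) metis
  then have "card ?M = card A ^ card (X - A)" by (simp add: card_image card_outer_maps[OF finite_X])
  moreover have "collapse X A (h 1) (h 0) \<notin> ?M"
    using M collapse_RegTXA(2)[OF h01(2,1,3)] by (meson subsetD)
  ultimately show ?thesis
    using finite_outer_maps[OF finite_X A_subset] by (simp add: proper_generators_def)
qed

lemma generates_proper_generators:
  assumes "\<not> X \<subseteq> A"
  shows "generates (comp_on X) (RegTXA X A) proper_generators"
proof -
  obtain x\<^sub>0 where x\<^sub>0: "x\<^sub>0 \<in> X" "x\<^sub>0 \<notin> A" using assms by blast
  define w\<^sub>1 where "w\<^sub>1 = restrict (\<lambda>_. h 0) (X - A)"
  define w\<^sub>2 where "w\<^sub>2 = restrict (\<lambda>_. h 1) (X - A)"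
  have w: "w\<^sub>1 \<in> outer_maps X A" "w\<^sub>2 \<in> outer_maps X A"
    unfolding w\<^sub>1_def w\<^sub>2_def using h01 by (simp_all add: outer_maps_const)
  have "w\<^sub>1 x\<^sub>0 \<noteq> w\<^sub>2 x\<^sub>0" using x\<^sub>0 h01(3) by (simp add: w\<^sub>1_def w\<^sub>2_def)
  then have "w\<^sub>2 \<noteq> w\<^sub>1" by metis
  then have "outer_perm w\<^sub>1 = Transposition.transpose (h 0) (h 1)" "outer_perm w\<^sub>2 = rotation"
    unfolding outer_perm_def w\<^sub>1_def[symmetric] w\<^sub>2_def[symmetric] by simp_all
  then have t: "mk_maxrank X A (Transposition.transpose (h 0) (h 1)) w\<^sub>1 \<in> proper_generators"
    and r: "mk_maxrank X A rotation w\<^sub>2 \<in> proper_generators"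
    using mk_maxrank_outer_perm_mem[OF w(1)] mk_maxrank_outer_perm_mem[OF w(2)] by simp_all
  have "proper_generators \<subseteq> RegTXA X A"
    using mk_maxrank_maxrank[OF outer_perm_permutes] collapse_RegTXA(1)[OF h01(2,1,3)]
    by (auto simp: proper_generators_def maxrank_def)
  then show ?thesis
  proof (rule generates_RegTXAI[OF _ _ _ w(1) t w(2) r])
    show "collapse X A (h 1) (h 0) \<in> proper_generators" by (simp add: proper_generators_def)
    show "\<exists>p. p permutes A \<and> mk_maxrank X A p w \<in> proper_generators" if "w \<in> outer_maps X A" for w
      using outer_perm_permutes mk_maxrank_outer_perm_mem[OF that] by blast
  qed
qed

lemma has_rank_finite:
  assumes "\<not> (X \<subseteq> A \<and> 3 \<le> card A)"
  shows "has_rank (comp_on X) (RegTXA X A) {..<1 + card A ^ card (X - A)}"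
proof -
  have lower: "finite G \<and> 1 + card A ^ card (X - A) \<le> card G"
    if "generates (comp_on X) (RegTXA X A) G" for G
    using card_generators_lower[OF that] two_le_n card_outer_maps[OF finite_X] by simp
  show ?thesis
  proof (cases "X \<subseteq> A")
    case True
    then have "card (X - A) = 0" by (simp add: Diff_eq_empty_iff[THEN iffD2])
    moreover have "card A = 2" using True assms two_le_n by auto
    ultimately show ?thesis
      using has_rank_lessThanI[OF generates_full_generators[OF True] _ _ lower]
        card_full_generators[OF True] by (simp add: full_generators_def)
  next
    case False
    have "finite proper_generators"
      using finite_outer_maps[OF finite_X A_subset] by (simp add: proper_generators_def)
    then show ?thesis
      using has_rank_lessThanI[OF generates_proper_generators[OF False] _ card_proper_generators lower]
      by blast
  qed
qed

end

theorem theorem5p24: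
  fixes X A :: "'a set"
  assumes "X \<noteq> {}" and "A \<noteq> {}" and "A \<subseteq> X"
  defines "P \<equiv> Reg (TXA X A) (comp_on X)"
  shows "(card A = 1 \<longrightarrow> has_rank (comp_on X) P {..<(1::nat)})
       \<and> (card A \<noteq> 1 \<and> infinite X \<longrightarrow> has_rank (comp_on X) P (Pow X))
       \<and> (finite X \<and> 3 \<le> card A \<and> card A = card X \<longrightarrow> has_rank (comp_on X) P {..<(3::nat)})
       \<and> (finite X \<and> 2 \<le> card A \<and> \<not> (3 \<le> card A \<and> card A = card X) \<longrightarrow>
            has_rank (comp_on X) P {..<(1 + card A ^ card (X - A))})"
proof -
  interpret subset_TXA X A using assms by unfold_locales
  have P: "P = RegTXA X A" by (simp add: P_def RegTXA_def)
  have finite_cases: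
    "3 \<le> card A \<and> card A = card X \<Longrightarrow> has_rank (comp_on X) P {..<(3::nat)}"
    "\<not> (3 \<le> card A \<and> card A = card X) \<Longrightarrow> has_rank (comp_on X) P {..<(1 + card A ^ card (X - A))}"
    if fin: "finite X" and two: "2 \<le> card A"
  proof -
    interpret finite_TXA X A using fin by unfold_locales
    obtain h where "enumeration A h (card A)" using enumeration_exists[OF finite_A two] .
    then interpret enumerated_TXA X A h by intro_locales
    have full_iff: "card A = card X \<longleftrightarrow> X \<subseteq> A"
      using card_subset_eq[OF finite_X A_subset] A_subset by auto
    show "3 \<le> card A \<and> card A = card X \<Longrightarrow> has_rank (comp_on X) P {..<(3::nat)}"
      unfolding P full_iff by (intro has_rank_full) simp_all
    show "\<not> (3 \<le> card A \<and> card A = card X) \<Longrightarrow> has_rank (comp_on X) P {..<(1 + card A ^ card (X - A))}"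
      unfolding P full_iff by (intro has_rank_finite) blast
  qed
  show ?thesis
    unfolding P
    by (intro conjI impI has_rank_card_1 has_rank_infinite finite_cases[unfolded P]) auto
qed

end
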